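(* Let $m\ge 2$ be an integer, let $x_0,\dots,x_N\in[0,1]$ be distinct nodes, and let $$G(x)=\frac{\operatorname{sign}x}{2}\left(\frac{e^x-e^{-x}}{2}-\sum_{k=1}^{m-1}\frac{x^{2k-1}}{(2k-1)!}\right).$$ Let $S$ be the $m\times(N+1)$ matrix whose rows are $(x_0^{\alpha},\dots,x_N^{\alpha})$ for $\alpha=0,1,\dots,m-2$ and, as last row, $(e^{-x_0},\dots,e^{-x_N})$. Define $$\Phi(\overline{\mathbf C})=2(-1)^m\sum_{\beta=0}^N\sum_{\gamma=0}^N G(x_\beta-x_\gamma)\,\overline C_\beta\overline C_\gamma,\qquad \overline{\mathbf C}=(\overline C_0,\dots,\overline C_N)\in\mathbb R^{N+1}.$$ Then for every nonzero vector $\overline{\mathbf C}\in\mathbb R^{N+1}$ with $S\overline{\mathbf C}=0$, one has $\Phi(\overline{\mathbf C})>0$.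
   Context: Here $\Phi$ is (up to the factor in the Lagrange function) the quadratic form arising from the squared norm of the error functional of a quadrature formula $\int_0^1\varphi\,dx\cong\sum_\beta C_\beta\varphi(x_\beta)$ in the space $W_2^{(m,m-1)}(0,1)$ with norm $\left(\int_0^1(\varphi^{(m)}+\varphi^{(m-1)})^2dx\right)^{1/2}$; the condition $S\overline{\mathbf C}=0$ means $\sum_\gamma\overline C_\gamma x_\gamma^\alpha=0$ for $\alpha=0,\dots,m-2$ and $\sum_\gamma\overline C_\gamma e^{-x_\gamma}=0$. *)

theory Defs
  imports Complex_Main
begin

definition G :: "nat \<Rightarrow> real \<Rightarrow> real" where
  "G m x = sgn x / 2 * ((exp x - exp (- x)) / 2
      - (\<Sum>k = 1..m - 1. x ^ (2 * k - 1) / fact (2 * k - 1)))"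

definition Smat :: "nat \<Rightarrow> (nat \<Rightarrow> real) \<Rightarrow> nat \<Rightarrow> nat \<Rightarrow> real" where
  "Smat m x i j = (if i < m - 1 then x j ^ i else exp (- x j))"

definition Phi :: "nat \<Rightarrow> nat \<Rightarrow> (nat \<Rightarrow> real) \<Rightarrow> (nat \<Rightarrow> real) \<Rightarrow> real" where
  "Phi m N x C = 2 * (-1) ^ m * (\<Sum>\<beta> = 0..N. \<Sum>\<gamma> = 0..N. G m (x \<beta> - x \<gamma>) * C \<beta> * C \<gamma>)"

end

theory Submission
  imports Defs "HOL-Analysis.Analysis"
begin

text \<open>
  Write L = D^m + D^(m-1) = D^(m-1) (D + 1). Away from 0, differentiating G gives
  L G (y) = sgn y / 2 * (e^y - sum_{i<m-1} y^i / i!), while G is smooth enough at 0 for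
  its first m derivatives to exist. Let g be the impulse response of L and
  w(t) = sum_b C_b g((x_b - t)_+). The weights annihilate the kernel of L, which is spanned
  by 1, ..., a^(m-2) and e^(-a); hence sum_c C_c L G (t - x_c) = (-1)^m w(t), and the
  variation-of-constants formula G(x_b - x_c) = int_0^(x_b) g(x_b - t) L G (t - x_c) dt
  + (an element of that kernel) turns Phi(C) into 2 int_0^1 w^2. Finally w is continuous and
  does not vanish just to the left of the largest node carrying a nonzero weight.
\<close>

section \<open>Derivatives of G\<close>

definition sinh_deriv :: "nat \<Rightarrow> real \<Rightarrow> real" where
  "sinh_deriv j y = (exp y - (-1)^j * exp (-y)) / 2"

text \<open>The j-th derivative of the polynomial sum_{k=1..m-1} y^(2k-1) / (2k-1)! occurring in G:
  differentiating drops the top term and shifts the parity test by one.\<close>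
definition sinh_taylor_deriv :: "nat \<Rightarrow> nat \<Rightarrow> real \<Rightarrow> real" where
  "sinh_taylor_deriv m j y = (\<Sum>i<2*m-2-j. if odd (i+j) then y^i / fact i else 0)"

definition G_deriv :: "nat \<Rightarrow> nat \<Rightarrow> real \<Rightarrow> real" where
  "G_deriv m j y = sgn y / 2 * (sinh_deriv j y - sinh_taylor_deriv m j y)"

lemma DERIV_sum_power_div_fact:
  "((\<lambda>y. \<Sum>i<n. c i * y^i / fact i) has_real_derivative (\<Sum>i<n-1. c (Suc i) * y^i / fact i)) (at y)"
proof (cases n)
  case 0
  then show ?thesis by simp
next
  case (Suc k)
  have "((\<lambda>y. c 0 + (\<Sum>i<k. c (Suc i) / fact (Suc i) * y^Suc i)) has_real_derivative
      0 + (\<Sum>i<k. c (Suc i) / fact (Suc i) * (real (Suc i) * y^i))) (at y)"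
    by (intro DERIV_add DERIV_const DERIV_sum DERIV_cmult DERIV_cong[OF DERIV_pow]) simp
  moreover have "c (Suc i) / fact (Suc i) * (real (Suc i) * y^i) = c (Suc i) * y^i / fact i" for i
    by (simp add: fact_Suc field_simps del: of_nat_Suc)
  moreover have "(\<lambda>y. \<Sum>i<Suc k. c i * y^i / fact i) = (\<lambda>y. c 0 + (\<Sum>i<k. c (Suc i) / fact (Suc i) * y^Suc i))"
    by (simp only: sum.lessThan_Suc_shift) simp
  ultimately show ?thesis
    using Suc by simp
qed

lemma DERIV_sinh_deriv: "(sinh_deriv j has_real_derivative sinh_deriv (Suc j) y) (at y)"
  unfolding sinh_deriv_def by (auto intro!: derivative_eq_intros simp: algebra_simps)

lemma DERIV_sinh_taylor_deriv:
  "(sinh_taylor_deriv m j has_real_derivative sinh_taylor_deriv m (Suc j) y) (at y)"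
proof -
  define c :: "nat \<Rightarrow> nat \<Rightarrow> real" where "c l i = (if odd (i + l) then 1 else 0)" for l i
  have taylor_c: "sinh_taylor_deriv m l = (\<lambda>y. \<Sum>i<2*m-2-l. c l i * y^i / fact i)" for l
    by (auto simp: sinh_taylor_deriv_def c_def fun_eq_iff intro!: sum.cong)
  have "2*m-2-j-1 = 2*m-2-Suc j" "\<And>i. c j (Suc i) = c (Suc j) i"
    by (simp_all add: c_def)
  then show ?thesis
    using DERIV_sum_power_div_fact[where n="2*m-2-j" and c="c j" and y=y]
    by (simp only: taylor_c)
qed

lemma sinh_taylor_deriv_0:
  assumes "j \<le> 2*m - 2"
  shows "sinh_taylor_deriv m j 0 = sinh_deriv j 0"
proof (cases "j < 2*m - 2")
  case True
  define k where "k = 2*m - 2 - j - 1"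
  have k: "2*m - 2 - j = Suc k"
    using True by (simp add: k_def)
  have "sinh_taylor_deriv m j 0 = (if odd j then 1 else 0)"
    unfolding sinh_taylor_deriv_def k sum.lessThan_Suc_shift by (simp cong: if_cong)
  then show ?thesis
    by (simp add: sinh_deriv_def)
next
  case False
  with assms have "j = 2*(m - 1)"
    by simp
  then show ?thesis
    by (simp add: sinh_taylor_deriv_def sinh_deriv_def)
qed

lemma DERIV_sgn_mult_at_0:
  fixes f :: "real \<Rightarrow> real"
  assumes "(f has_real_derivative 0) (at 0)" "f 0 = 0"
  shows "((\<lambda>y. sgn y * f y) has_real_derivative 0) (at 0)"
proof -
  have "((\<lambda>h. f h / h) \<longlongrightarrow> 0) (at 0)"
    using assms unfolding DERIV_def by simp
  then have "((\<lambda>h. sgn h * f h / h) \<longlongrightarrow> 0) (at 0)"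
  proof (rule Lim_null_comparison[rotated, OF tendsto_rabs_zero])
    have "norm (sgn h * f h / h) \<le> \<bar>f h / h\<bar>" for h
      by (cases "h = 0") (auto simp: abs_mult abs_sgn_eq)
    then show "\<forall>\<^sub>F h in at 0. norm (sgn h * f h / h) \<le> \<bar>f h / h\<bar>"
      by (intro always_eventually) auto
  qed
  then show ?thesis
    unfolding DERIV_def by simp
qed

lemma DERIV_G_deriv:
  assumes "Suc j \<le> 2*m - 2"
  shows "(G_deriv m j has_real_derivative G_deriv m (Suc j) y) (at y)"
proof -
  define F where "F l y = sinh_deriv l y - sinh_taylor_deriv m l y" for l y
  have G_F: "G_deriv m l = (\<lambda>y. sgn y / 2 * F l y)" for l
    by (simp add: fun_eq_iff G_deriv_def F_def)
  have F: "(F j has_real_derivative F (Suc j) z) (at z)" for z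
    unfolding F_def[abs_def] by (intro DERIV_diff DERIV_sinh_deriv DERIV_sinh_taylor_deriv)
  show ?thesis
  proof (cases "y = 0")
    case True
    have "F j 0 = 0" "F (Suc j) 0 = 0"
      using assms by (simp_all add: F_def sinh_taylor_deriv_0)
    then have "((\<lambda>z. sgn z * F j z) has_real_derivative 0) (at 0)"
      using DERIV_sgn_mult_at_0 F[of 0] by simp
    from DERIV_cdivide[OF this, of 2] show ?thesis
      using True by (simp add: G_F)
  next
    case False
    define S where "S = (if y > 0 then {0<..} else {..<(0::real)})"
    have S: "open S" "y \<in> S" "\<And>z. z \<in> S \<Longrightarrow> sgn z = sgn y"
      using False by (auto simp: S_def split: if_splits)
    have "((\<lambda>z. sgn y / 2 * F j z) has_real_derivative sgn y / 2 * F (Suc j) y) (at y)"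
      by (rule DERIV_cmult[OF F])
    then have "(G_deriv m j has_real_derivative sgn y / 2 * F (Suc j) y) (at y)"
      by (rule has_field_derivative_transform_within_open[OF _ S(1,2)]) (simp add: G_F S(3))
    then show ?thesis
      by (simp add: G_F)
  qed
qed

lemma sum_lessThan_double_odd:
  fixes f :: "nat \<Rightarrow> 'a :: comm_monoid_add"
  shows "(\<Sum>i<2*n. if odd i then f i else 0) = (\<Sum>k=1..n. f (2*k - 1))"
proof (induction n)
  case (Suc n)
  have "{..<2 * Suc n} = insert (Suc (2*n)) (insert (2*n) {..<2*n})"
    by auto
  then show ?case
    using Suc by (simp add: add.commute)
qed simp

lemma G_eq_G_deriv_0: "G m = G_deriv m 0"
proof -
  have "2*m - 2 - 0 = 2*(m-1)"
    by simp
  then have "sinh_taylor_deriv m 0 y = (\<Sum>k=1..m-1. y^(2*k-1) / fact (2*k-1))" for y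
    by (simp only: sinh_taylor_deriv_def add_0_right sum_lessThan_double_odd)
  then show ?thesis
    by (simp add: fun_eq_iff G_def G_deriv_def sinh_deriv_def)
qed

lemma sinh_deriv_minus_taylor_add_pred:
  assumes "m \<ge> 2"
  shows "(sinh_deriv m y - sinh_taylor_deriv m m y) + (sinh_deriv (m-1) y - sinh_taylor_deriv m (m-1) y)
    = exp y - (\<Sum>i<m-1. y^i / fact i)"
proof -
  obtain k where k: "m = Suc (Suc k)"
    using assms by (metis add_2_eq_Suc le_Suc_ex)
  have "sinh_deriv m y + sinh_deriv (m-1) y = exp y"
    by (simp add: sinh_deriv_def k field_simps)
  moreover have "sinh_taylor_deriv m m y + sinh_taylor_deriv m (m-1) y = (\<Sum>i<Suc k. y^i / fact i)"
  proof -
    have "sinh_taylor_deriv m m y = (\<Sum>i<Suc k. if odd (i+k) then y^i / fact i else 0)"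
      by (auto simp: sinh_taylor_deriv_def k intro!: sum.cong)
    moreover have "sinh_taylor_deriv m (m-1) y = (\<Sum>i<Suc k. if even (i+k) then y^i / fact i else 0)"
      by (auto simp: sinh_taylor_deriv_def k intro!: sum.cong)
    ultimately have "sinh_taylor_deriv m m y + sinh_taylor_deriv m (m-1) y
        = (\<Sum>i<Suc k. (if odd (i+k) then y^i / fact i else 0) + (if even (i+k) then y^i / fact i else 0))"
      by (simp add: sum.distrib)
    also have "\<dots> = (\<Sum>i<Suc k. y^i / fact i)"
      by (intro sum.cong) auto
    finally show ?thesis .
  qed
  ultimately show ?thesis
    using k by simp
qed

section \<open>The impulse response of L\<close>

text \<open>The solution of u^(m) + u^(m-1) = 0 with u^(j)(0) = 0 for j < m - 1 and u^(m-1)(0) = 1.\<close>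
definition green :: "nat \<Rightarrow> real \<Rightarrow> real" where
  "green m s = (-1)^(m-1) * (exp (-s) - (\<Sum>k<m-1. (-s)^k / fact k))"

lemma green_0:
  assumes "m \<ge> 2"
  shows "green m 0 = 0"
proof -
  have "m - 1 = Suc (m - 2)"
    using assms by arith
  then show ?thesis
    unfolding green_def by (simp only: sum.lessThan_Suc_shift) (auto intro!: sum.neutral)
qed

lemma green_nonzero:
  assumes "m \<ge> 2" "s > 0"
  shows "green m s \<noteq> 0"
proof -
  obtain u where "exp (-s) = (\<Sum>k<m-1. (-s)^k / fact k) + exp u / fact (m-1) * (-s)^(m-1)"
    using Maclaurin_exp_lt[of "-s" "m-1"] assms by auto
  then show ?thesis
    using assms by (simp add: green_def)
qed

definition L_G :: "nat \<Rightarrow> real \<Rightarrow> real" where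
  "L_G m y = G_deriv m m y + G_deriv m (m-1) y"

lemma L_G_eq_green:
  assumes "m \<ge> 2"
  shows "L_G m y = (-1)^(m-1) * (green m (-y) - 2 * green m (max (-y) 0)) / 2"
proof -
  have "L_G m y = sgn y / 2 * (exp y - (\<Sum>i<m-1. y^i / fact i))"
    unfolding L_G_def G_deriv_def sinh_deriv_minus_taylor_add_pred[OF assms, symmetric] by algebra
  also have "exp y - (\<Sum>i<m-1. y^i / fact i) = (-1)^(m-1) * green m (-y)"
    by (simp add: green_def)
  also have "sgn y / 2 * ((-1)^(m-1) * green m (-y)) = (-1)^(m-1) * (sgn y * green m (-y)) / 2"
    by simp
  also have "sgn y * green m (-y) = green m (-y) - 2 * green m (max (-y) 0)"
    by (cases y "0::real" rule: linorder_cases) (auto simp: green_0[OF assms] max_def)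
  finally show ?thesis .
qed

lemma green_mult_eq:
  "green m (a - t) * u = (-1)^(m-1) * (exp (t - a) * u - (\<Sum>k<m-1. (-1)^k * ((a - t)^k / fact k * u)))"
proof -
  have "(t - a)^k = (-1)^k * (a - t)^k" for k
    by (metis minus_diff_eq power_minus)
  then have "(t - a)^k / fact k * u = (-1)^k * ((a - t)^k / fact k * u)" for k
    by simp
  then show ?thesis
    by (simp only: green_def minus_diff_eq mult.assoc left_diff_distrib sum_distrib_right)
qed

lemma sum_alternating_telescope:
  "(\<Sum>k<n. (-1)^k * (\<psi> (n-k) + \<psi> (n-k-1))) = \<psi> n - (-1)^n * (\<psi> 0 :: real)"
proof (induction n)
  case 0
  then show ?case by simp
next
  case (Suc n)
  have "(\<Sum>k<Suc n. (-1)^k * (\<psi> (Suc n-k) + \<psi> (Suc n-k-1))) =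
      (\<psi> (Suc n) + \<psi> n) + (\<Sum>k<n. (-1)^(Suc k) * (\<psi> (n-k) + \<psi> (n-k-1)))"
    unfolding sum.lessThan_Suc_shift by simp
  also have "\<dots> = (\<psi> (Suc n) + \<psi> n) - (\<Sum>k<n. (-1)^k * (\<psi> (n-k) + \<psi> (n-k-1)))"
    by (simp add: sum_negf)
  finally show ?case
    using Suc by simp
qed

lemma has_integral_exp_mult_deriv_add:
  fixes f f' :: "real \<Rightarrow> real"
  assumes "a \<ge> 0" and "\<And>t. t \<in> {0..a} \<Longrightarrow> (f has_real_derivative f' t) (at t within {0..a})"
  shows "((\<lambda>t. exp (t - a) * (f' t + f t)) has_integral f a - exp (-a) * f 0) {0..a}"
proof -
  have "((\<lambda>t. exp (t - a) * f t) has_vector_derivative exp (t - a) * (f' t + f t)) (at t within {0..a})"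
    if "t \<in> {0..a}" for t
    using assms(2)[OF that] unfolding has_real_derivative_iff_has_vector_derivative[symmetric]
    by (auto intro!: derivative_eq_intros simp: algebra_simps)
  from fundamental_theorem_of_calculus[OF assms(1) this]
  show ?thesis
    by (simp add: exp_minus_inverse[symmetric])
qed

lemma has_integral_taylor_remainder:
  fixes \<phi> :: "nat \<Rightarrow> real \<Rightarrow> real"
  assumes "a \<ge> 0" "Suc k \<le> n"
    and "\<And>j t. j < n \<Longrightarrow> t \<in> {0..a} \<Longrightarrow>
      (\<phi> j has_real_derivative \<phi> (Suc j) t) (at t within {0..a})"
  shows "((\<lambda>t. (a - t)^k / fact k * \<phi> n t) has_integral
    \<phi> (n - Suc k) a - (\<Sum>i<Suc k. a^i / fact i * \<phi> (n - Suc k + i) 0)) {0..a}"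
  using Taylor_has_integral[of "Suc k" "\<lambda>i. \<phi> (n - Suc k + i)" _ 0 a] assms
    assms(3)[unfolded has_real_derivative_iff_has_vector_derivative]
  by simp

text \<open>The contribution of the initial values v j = phi^(j)(0) to the variation-of-constants
  formula below; as a function of a it lies in the span of e^(-a), 1, a, ..., a^(m-2).\<close>
definition green_boundary :: "nat \<Rightarrow> (nat \<Rightarrow> real) \<Rightarrow> real \<Rightarrow> real" where
  "green_boundary m v a = (-1)^(m-1) * (exp (-a) * v (m-1) -
     (\<Sum>k<m-1. (-1)^k * (\<Sum>i<Suc k. a^i / fact i * (v (m - Suc k + i) + v (m - 1 - Suc k + i)))))"

lemma green_variation_of_constants:
  fixes \<phi> :: "nat \<Rightarrow> real \<Rightarrow> real"
  assumes "m \<ge> 2" "a \<ge> 0"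
    and deriv: "\<And>j t. j < m \<Longrightarrow> t \<in> {0..a} \<Longrightarrow>
      (\<phi> j has_real_derivative \<phi> (Suc j) t) (at t within {0..a})"
  shows "((\<lambda>t. green m (a - t) * (\<phi> m t + \<phi> (m-1) t)) has_integral
      \<phi> 0 a - green_boundary m (\<lambda>j. \<phi> j 0) a) {0..a}"
proof -
  define S where "S n k = (\<Sum>i<Suc k. a^i / fact i * \<phi> (n - Suc k + i) 0)" for n k
  have "(\<phi> (m-1) has_real_derivative \<phi> m t) (at t within {0..a})" if "t \<in> {0..a}" for t
    using deriv[of "m-1" t] that assms(1) by simp
  then have exp_part: "((\<lambda>t. exp (t - a) * (\<phi> m t + \<phi> (m-1) t)) has_integral
      \<phi> (m-1) a - exp (-a) * \<phi> (m-1) 0) {0..a}"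
    by (rule has_integral_exp_mult_deriv_add[OF \<open>a \<ge> 0\<close>])
  have taylor: "((\<lambda>t. (a - t)^k / fact k * \<phi> n t) has_integral \<phi> (n - Suc k) a - S n k) {0..a}"
    if "Suc k \<le> n" "n \<le> m" for k n
    unfolding S_def using that by (intro has_integral_taylor_remainder \<open>a \<ge> 0\<close> deriv) auto
  have poly_part: "((\<lambda>t. \<Sum>k<m-1. (-1)^k * ((a - t)^k / fact k * (\<phi> m t + \<phi> (m-1) t))) has_integral
      (\<Sum>k<m-1. (-1)^k * ((\<phi> (m-1-k) a + \<phi> (m-1-k-1) a) - (S m k + S (m-1) k)))) {0..a}"
  proof (rule has_integral_sum[OF finite_lessThan], rule has_integral_mult_right)
    fix k
    assume "k \<in> {..<m-1}"
    then have "((\<lambda>t. (a - t)^k / fact k * \<phi> m t + (a - t)^k / fact k * \<phi> (m-1) t) has_integral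
        (\<phi> (m - Suc k) a - S m k) + (\<phi> (m - 1 - Suc k) a - S (m-1) k)) {0..a}"
      by (intro has_integral_add taylor) auto
    then show "((\<lambda>t. (a - t)^k / fact k * (\<phi> m t + \<phi> (m-1) t)) has_integral
        (\<phi> (m-1-k) a + \<phi> (m-1-k-1) a) - (S m k + S (m-1) k)) {0..a}"
      by (simp add: distrib_left algebra_simps)
  qed
  define T where "T = (\<Sum>k<m-1. (-1)^k * (\<phi> (m-1-k) a + \<phi> (m-1-k-1) a))"
  define B where "B = (\<Sum>k<m-1. (-1)^k * (S m k + S (m-1) k))"
  have "(\<Sum>k<m-1. (-1)^k * ((\<phi> (m-1-k) a + \<phi> (m-1-k-1) a) - (S m k + S (m-1) k))) = T - B"
    by (simp add: T_def B_def right_diff_distrib sum_subtractf)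
  moreover have "T = \<phi> (m-1) a - (-1)^(m-1) * \<phi> 0 a"
    using sum_alternating_telescope[where n="m-1" and \<psi>="\<lambda>j. \<phi> j a"] by (simp add: T_def)
  moreover have "green_boundary m (\<lambda>j. \<phi> j 0) a = (-1)^(m-1) * (exp (-a) * \<phi> (m-1) 0 - B)"
    by (simp add: green_boundary_def B_def S_def sum.distrib distrib_left)
  ultimately have "(-1)^(m-1) * ((\<phi> (m-1) a - exp (-a) * \<phi> (m-1) 0) -
      (\<Sum>k<m-1. (-1)^k * ((\<phi> (m-1-k) a + \<phi> (m-1-k-1) a) - (S m k + S (m-1) k))))
      = \<phi> 0 a - green_boundary m (\<lambda>j. \<phi> j 0) a"
    by (simp add: right_diff_distrib distrib_left)
  with has_integral_mult_right[OF has_integral_diff[OF exp_part poly_part], of "(-1)^(m-1)"]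
  show ?thesis
    by (simp add: green_mult_eq)
qed

section \<open>Functions annihilated by the weights\<close>

definition annihilates :: "nat set \<Rightarrow> (nat \<Rightarrow> real) \<Rightarrow> (nat \<Rightarrow> real) \<Rightarrow> (real \<Rightarrow> real) \<Rightarrow> bool" where
  "annihilates I C x f \<longleftrightarrow> (\<Sum>j\<in>I. C j * f (x j)) = 0"

lemma annihilates_diff:
  "annihilates I C x f \<Longrightarrow> annihilates I C x g \<Longrightarrow> annihilates I C x (\<lambda>a. f a - g a)"
  unfolding annihilates_def by (simp add: right_diff_distrib sum_subtractf)

lemma annihilates_mult_left: "annihilates I C x f \<Longrightarrow> annihilates I C x (\<lambda>a. c * f a)"
  unfolding annihilates_def by (simp add: sum_distrib_left[symmetric] algebra_simps)

lemma annihilates_mult_right: "annihilates I C x f \<Longrightarrow> annihilates I C x (\<lambda>a. f a * c)"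
  using annihilates_mult_left[of I C x f c] by (simp add: mult.commute)

lemma annihilates_divide: "annihilates I C x f \<Longrightarrow> annihilates I C x (\<lambda>a. f a / c)"
  using annihilates_mult_right[of I C x f "1 / c"] by simp

lemma annihilates_sum:
  "finite K \<Longrightarrow> (\<And>k. k \<in> K \<Longrightarrow> annihilates I C x (f k)) \<Longrightarrow> annihilates I C x (\<lambda>a. \<Sum>k\<in>K. f k a)"
  unfolding annihilates_def sum_distrib_left by (subst sum.swap) simp

lemma annihilates_power_diff:
  assumes "\<And>i. i \<le> k \<Longrightarrow> annihilates I C x (\<lambda>a. a^i)"
  shows "annihilates I C x (\<lambda>a. (t - a)^k)"
proof -
  have "(t - a)^k = (\<Sum>i\<le>k. of_nat (k choose i) * ((-1)^i * a^i) * t^(k-i))" for a :: real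
  proof -
    have "(t - a)^k = (-a + t)^k"
      by simp
    also have "\<dots> = (\<Sum>i\<le>k. of_nat (k choose i) * (-a)^i * t^(k-i))"
      by (rule binomial_ring)
    finally show ?thesis
      by (simp only: power_minus[of a])
  qed
  then show ?thesis
    by (simp only:) (intro annihilates_sum annihilates_mult_left annihilates_mult_right assms; simp)
qed

context
  fixes I C x and m :: nat
  assumes powers: "\<And>i. i < m - 1 \<Longrightarrow> annihilates I C x (\<lambda>a. a^i)"
    and exp: "annihilates I C x (\<lambda>a. exp (-a))"
begin

lemma annihilates_green_boundary: "annihilates I C x (green_boundary m v)"
  unfolding green_boundary_def
  by (intro annihilates_mult_left annihilates_diff annihilates_mult_right annihilates_divide exp
      annihilates_sum powers) auto

lemma annihilates_green_shift: "annihilates I C x (\<lambda>a. green m (a - t))"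
proof -
  have "green m (a - t) = (-1)^(m-1) * (exp t * exp (-a) - (\<Sum>k<m-1. (t - a)^k / fact k))" for a
    by (simp add: green_def exp_add[symmetric])
  then show ?thesis
    by (simp only:) (intro annihilates_mult_left annihilates_diff annihilates_sum annihilates_divide
        annihilates_power_diff powers exp; simp)
qed

end

section \<open>The square integral representation\<close>

lemma has_integral_green_mult_L_G:
  assumes m: "m \<ge> 2" and "a \<ge> 0"
  shows "((\<lambda>t. green m (a - t) * L_G m (t - c)) has_integral
    G m (a - c) - green_boundary m (\<lambda>j. G_deriv m j (- c)) a) {0..a}"
proof -
  have "((\<lambda>t. G_deriv m j (t - c)) has_real_derivative G_deriv m (Suc j) (t - c)) (at t within {0..a})"
    if "j < m" for j t
  proof -
    have "(G_deriv m j has_real_derivative G_deriv m (Suc j) (t + - c)) (at (t + - c))"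
      by (rule DERIV_G_deriv) (use that m in simp)
    then have "((\<lambda>t. G_deriv m j (t + - c)) has_real_derivative G_deriv m (Suc j) (t + - c)) (at t)"
      by (simp only: DERIV_shift)
    then show ?thesis
      by (simp add: has_field_derivative_at_within)
  qed
  from green_variation_of_constants[OF m \<open>a \<ge> 0\<close>, of "\<lambda>j t. G_deriv m j (t - c)", OF this]
  show ?thesis
    by (simp add: L_G_def G_eq_G_deriv_0)
qed

text \<open>The function w of the proof idea: the Peano kernel of f \<mapsto> sum_b C_b f(x_b) with respect to L.\<close>
definition peano_kernel :: "nat \<Rightarrow> nat set \<Rightarrow> (nat \<Rightarrow> real) \<Rightarrow> (nat \<Rightarrow> real) \<Rightarrow> real \<Rightarrow> real" where
  "peano_kernel m I C x t = (\<Sum>\<beta>\<in>I. C \<beta> * green m (max (x \<beta> - t) 0))"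

context
  fixes I C x and m :: nat
  assumes m: "m \<ge> 2"
    and finite: "finite I"
    and powers: "\<And>i. i < m - 1 \<Longrightarrow> annihilates I C x (\<lambda>a. a^i)"
    and exp: "annihilates I C x (\<lambda>a. exp (-a))"
begin

lemma sum_L_G_nodes: "(\<Sum>\<gamma>\<in>I. C \<gamma> * L_G m (t - x \<gamma>)) = (-1)^m * peano_kernel m I C x t"
proof -
  have "C \<gamma> * L_G m (t - x \<gamma>) =
      (-1)^(m-1) / 2 * (C \<gamma> * green m (x \<gamma> - t)) - (-1)^(m-1) * (C \<gamma> * green m (max (x \<gamma> - t) 0))" for \<gamma>
    by (simp add: L_G_eq_green[OF m] field_simps)
  then have "(\<Sum>\<gamma>\<in>I. C \<gamma> * L_G m (t - x \<gamma>)) =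
      (-1)^(m-1) / 2 * (\<Sum>\<gamma>\<in>I. C \<gamma> * green m (x \<gamma> - t)) - (-1)^(m-1) * peano_kernel m I C x t"
    by (simp add: peano_kernel_def sum_subtractf sum_distrib_left)
  moreover have "(\<Sum>\<gamma>\<in>I. C \<gamma> * green m (x \<gamma> - t)) = 0"
    using annihilates_green_shift[OF powers exp] by (simp add: annihilates_def)
  moreover have "(-1::real)^m = - ((-1)^(m-1))"
    using m by (metis Suc_diff_1 less_le_trans pos2 power_Suc mult_minus1)
  ultimately show ?thesis
    by simp
qed

lemma has_integral_green_plus_mult_peano_kernel:
  assumes "a \<in> {0..1}"
  shows "((\<lambda>t. green m (max (a - t) 0) * ((-1)^m * peano_kernel m I C x t)) has_integral
    (\<Sum>\<gamma>\<in>I. C \<gamma> * (G m (a - x \<gamma>) - green_boundary m (\<lambda>j. G_deriv m j (- x \<gamma>)) a))) {0..1}"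
proof -
  have "((\<lambda>t. \<Sum>\<gamma>\<in>I. C \<gamma> * (green m (a - t) * L_G m (t - x \<gamma>))) has_integral
      (\<Sum>\<gamma>\<in>I. C \<gamma> * (G m (a - x \<gamma>) - green_boundary m (\<lambda>j. G_deriv m j (- x \<gamma>)) a))) {0..a}"
    using assms by (intro has_integral_sum has_integral_mult_right finite has_integral_green_mult_L_G m) auto
  moreover have "(\<Sum>\<gamma>\<in>I. C \<gamma> * (green m (a - t) * L_G m (t - x \<gamma>)))
      = green m (max (a - t) 0) * ((-1)^m * peano_kernel m I C x t)" if "t \<in> {0..a}" for t
  proof -
    have "(\<Sum>\<gamma>\<in>I. C \<gamma> * (green m (a - t) * L_G m (t - x \<gamma>))) = green m (a - t) * (\<Sum>\<gamma>\<in>I. C \<gamma> * L_G m (t - x \<gamma>))"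
      by (simp add: sum_distrib_left mult.left_commute)
    moreover have "max (a - t) 0 = a - t"
      using that by simp
    ultimately show ?thesis
      by (simp add: sum_L_G_nodes)
  qed
  ultimately have left: "((\<lambda>t. green m (max (a - t) 0) * ((-1)^m * peano_kernel m I C x t)) has_integral
      (\<Sum>\<gamma>\<in>I. C \<gamma> * (G m (a - x \<gamma>) - green_boundary m (\<lambda>j. G_deriv m j (- x \<gamma>)) a))) {0..a}"
    by (rule has_integral_eq[rotated]) simp
  have right: "((\<lambda>t. green m (max (a - t) 0) * ((-1)^m * peano_kernel m I C x t)) has_integral 0) {a..1}"
    by (rule has_integral_eq[OF _ has_integral_0]) (auto simp: green_0[OF m])
  from has_integral_combine[OF _ _ left right] assms show ?thesis
    by simp
qed

lemma has_integral_peano_kernel_square: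
  assumes "\<And>j. j \<in> I \<Longrightarrow> x j \<in> {0..1}"
  shows "((\<lambda>t. (peano_kernel m I C x t)^2) has_integral
    (-1)^m * (\<Sum>\<beta>\<in>I. \<Sum>\<gamma>\<in>I. G m (x \<beta> - x \<gamma>) * C \<beta> * C \<gamma>)) {0..1}"
proof -
  let ?bd = "\<lambda>\<gamma>. green_boundary m (\<lambda>j. G_deriv m j (- x \<gamma>))"
  have "((\<lambda>t. \<Sum>\<beta>\<in>I. C \<beta> * (green m (max (x \<beta> - t) 0) * ((-1)^m * peano_kernel m I C x t))) has_integral
      (\<Sum>\<beta>\<in>I. C \<beta> * (\<Sum>\<gamma>\<in>I. C \<gamma> * (G m (x \<beta> - x \<gamma>) - ?bd \<gamma> (x \<beta>))))) {0..1}"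
    by (intro has_integral_sum has_integral_mult_right has_integral_green_plus_mult_peano_kernel assms finite)
  moreover have "(\<Sum>\<beta>\<in>I. C \<beta> * (green m (max (x \<beta> - t) 0) * p)) = peano_kernel m I C x t * p" for t p
    by (simp add: peano_kernel_def sum_distrib_right mult.assoc)
  moreover have "(\<Sum>\<beta>\<in>I. \<Sum>\<gamma>\<in>I. C \<beta> * (C \<gamma> * ?bd \<gamma> (x \<beta>))) = 0"
  proof -
    have "(\<Sum>\<beta>\<in>I. \<Sum>\<gamma>\<in>I. C \<beta> * (C \<gamma> * ?bd \<gamma> (x \<beta>))) = (\<Sum>\<gamma>\<in>I. C \<gamma> * (\<Sum>\<beta>\<in>I. C \<beta> * ?bd \<gamma> (x \<beta>)))"
      by (subst sum.swap) (simp add: sum_distrib_left mult.left_commute)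
    also have "\<dots> = 0"
      using annihilates_green_boundary[OF powers exp] by (simp add: annihilates_def)
    finally show ?thesis .
  qed
  then have "(\<Sum>\<beta>\<in>I. C \<beta> * (\<Sum>\<gamma>\<in>I. C \<gamma> * (G m (x \<beta> - x \<gamma>) - ?bd \<gamma> (x \<beta>))))
      = (\<Sum>\<beta>\<in>I. \<Sum>\<gamma>\<in>I. G m (x \<beta> - x \<gamma>) * C \<beta> * C \<gamma>)"
    by (simp add: sum_distrib_left sum_subtractf right_diff_distrib mult.commute mult.left_commute)
  ultimately have "((\<lambda>t. peano_kernel m I C x t * ((-1)^m * peano_kernel m I C x t)) has_integral
      (\<Sum>\<beta>\<in>I. \<Sum>\<gamma>\<in>I. G m (x \<beta> - x \<gamma>) * C \<beta> * C \<gamma>)) {0..1}"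
    by simp
  from has_integral_mult_right[OF this, of "(-1)^m"] show ?thesis
    by (simp add: power2_eq_square mult.left_commute)
qed

end

lemma finite_inj_on_strict_Max:
  fixes x :: "'a \<Rightarrow> 'b :: linorder"
  assumes "finite K" "K \<noteq> {}" "inj_on x K"
  obtains b where "b \<in> K" "\<And>j. j \<in> K - {b} \<Longrightarrow> x j < x b"
proof -
  have "Max (x ` K) \<in> x ` K"
    using assms by (intro Max_in) auto
  then obtain b where b: "b \<in> K" "x b = Max (x ` K)"
    by auto
  have "x j < x b" if "j \<in> K - {b}" for j
  proof -
    have "x j \<le> x b"
      unfolding b(2) using assms(1) that by (intro Max_ge) auto
    moreover have "x j \<noteq> x b"
      using assms(3) that b(1) by (auto simp: inj_on_def)
    ultimately show ?thesis
      by simp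
  qed
  with b(1) show ?thesis
    by (rule that)
qed

lemma sum_eq_0_other_nonzero:
  assumes "finite I" "(\<Sum>j\<in>I. C j) = 0" "b \<in> I" "C b \<noteq> (0 :: 'a :: comm_monoid_add)"
  shows "\<exists>j\<in>I - {b}. C j \<noteq> 0"
proof (rule ccontr)
  assume "\<not> ?thesis"
  then have "(\<Sum>j\<in>I - {b}. C j) = 0"
    by (intro sum.neutral) blast
  moreover have "(\<Sum>j\<in>I. C j) = C b + (\<Sum>j\<in>I - {b}. C j)"
    by (rule sum.remove[OF assms(1,3)])
  ultimately show False
    using assms(2,4) by simp
qed

lemma peano_kernel_nonzero:
  assumes m: "m \<ge> 2" and "finite I" and "inj_on x I"
    and nodes: "\<And>j. j \<in> I \<Longrightarrow> x j \<in> {0..1}"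
    and "\<exists>j\<in>I. C j \<noteq> 0" and "(\<Sum>j\<in>I. C j) = 0"
  shows "\<exists>t\<in>{0..1}. peano_kernel m I C x t \<noteq> 0"
proof -
  define K where "K = {j\<in>I. C j \<noteq> 0}"
  have "finite K" "K \<subseteq> I"
    using \<open>finite I\<close> by (simp_all add: K_def)
  have "K \<noteq> {}"
    using \<open>\<exists>j\<in>I. C j \<noteq> 0\<close> by (auto simp: K_def)
  have "inj_on x K"
    using \<open>inj_on x I\<close> \<open>K \<subseteq> I\<close> by (rule inj_on_subset)
  obtain b where b: "b \<in> K" and top: "\<And>j. j \<in> K - {b} \<Longrightarrow> x j < x b"
    using finite_inj_on_strict_Max[OF \<open>finite K\<close> \<open>K \<noteq> {}\<close> \<open>inj_on x K\<close>] by blast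
  have "b \<in> I" "C b \<noteq> 0"
    using b by (auto simp: K_def)
  then obtain k where "k \<in> I - {b}" "C k \<noteq> 0"
    using sum_eq_0_other_nonzero[OF \<open>finite I\<close> \<open>(\<Sum>j\<in>I. C j) = 0\<close>] by blast
  then have "k \<in> K - {b}"
    by (simp add: K_def)
  define c where "c = Max (x ` (K - {b}))"
  have "c \<in> x ` (K - {b})"
    unfolding c_def using \<open>finite K\<close> \<open>k \<in> K - {b}\<close> by (intro Max_in) auto
  then obtain i where i: "i \<in> K - {b}" "c = x i"
    by blast
  then have c: "0 \<le> c" "c < x b"
    using top[OF i(1)] nodes[of i] \<open>K \<subseteq> I\<close> by auto
  define t where "t = (x b + c) / 2"
  have "t \<in> {0..1}"
    using c nodes[OF \<open>b \<in> I\<close>] by (simp add: t_def)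
  moreover have "C j * green m (max (x j - t) 0) = 0" if "j \<in> I - {b}" for j
  proof (cases "C j = 0")
    case False
    with that have "x j \<le> c"
      unfolding c_def using \<open>finite K\<close> by (intro Max_ge) (auto simp: K_def)
    then have "max (x j - t) 0 = 0"
      using c by (simp add: t_def)
    then show ?thesis
      by (simp add: green_0[OF m])
  qed simp
  then have "peano_kernel m I C x t = C b * green m (x b - t)"
    unfolding peano_kernel_def using c
    by (simp add: sum.remove[OF \<open>finite I\<close> \<open>b \<in> I\<close>] sum.neutral t_def)
  moreover have "C b * green m (x b - t) \<noteq> 0"
    using \<open>C b \<noteq> 0\<close> c green_nonzero[OF m, of "x b - t"] by (simp add: t_def)
  ultimately show ?thesis
    by (intro bexI[of _ t]) auto
qed

lemma has_integral_square_pos: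
  fixes f :: "real \<Rightarrow> real"
  assumes "continuous_on {a..b} f" "a < b"
    and "((\<lambda>t. (f t)^2) has_integral I) {a..b}"
    and "t \<in> {a..b}" "f t \<noteq> 0"
  shows "I > 0"
proof -
  have "continuous_on {a..b} (\<lambda>t. (f t)^2)"
    using assms(1) by (intro continuous_intros)
  then have "I \<noteq> 0"
    using integral_eq_0_iff[of a b "\<lambda>t. (f t)^2"] assms by (auto simp: integral_unique)
  moreover have "I \<ge> 0"
    using has_integral_nonneg[OF assms(3)] by simp
  ultimately show ?thesis
    by simp
qed

theorem theorem3p1:
  fixes m N :: nat and x C :: "nat \<Rightarrow> real"
  assumes "m \<ge> 2"
    and "\<forall>j \<in> {0..N}. x j \<in> {0..1}"
    and "inj_on x {0..N}"
    and "\<exists>j \<in> {0..N}. C j \<noteq> 0"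
    and "\<forall>i < m. (\<Sum>j = 0..N. Smat m x i j * C j) = 0"
  shows "Phi m N x C > 0"
proof -
  have powers: "annihilates {0..N} C x (\<lambda>a. a^i)" if "i < m - 1" for i
    using spec[OF assms(5), of i] that by (simp add: annihilates_def Smat_def mult.commute)
  have exp: "annihilates {0..N} C x (\<lambda>a. exp (-a))"
    using assms(1,5) spec[OF assms(5), of "m-1"] by (simp add: annihilates_def Smat_def mult.commute)
  have integral: "((\<lambda>t. (peano_kernel m {0..N} C x t)^2) has_integral Phi m N x C / 2) {0..1}"
    using has_integral_peano_kernel_square[OF assms(1) _ powers exp] assms(2)
    by (simp add: Phi_def atLeast0AtMost)
  obtain t where t: "t \<in> {0..1}" "peano_kernel m {0..N} C x t \<noteq> 0"
    using peano_kernel_nonzero[OF assms(1) finite_atLeastAtMost assms(3), of C] assms(2,4) powers[of 0] assms(1)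
    by (auto simp: annihilates_def)
  have "continuous_on {0..1} (peano_kernel m {0..N} C x)"
    unfolding peano_kernel_def green_def by (intro continuous_intros) auto
  from has_integral_square_pos[OF this _ integral t] show ?thesis
    by simp
qed

end
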